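(* Let $M_n=S_n\rtimes S_n$ be the semidirect product in which the second factor acts on the first (normal) factor by conjugation. Let $s_i$ denote the transposition $(i\ i{+}1)$ in the first factor and $t_i$ the transposition $(i\ i{+}1)$ in the second factor, $i=1,\dots,n-1$. Then $M_n$ admits the presentation with generators $s_i,t_i$ ($i=1,\dots,n-1$) and relations: $t_i^2=s_i^2=1$ ($1\le i\le n-1$); $s_is_j=s_js_i$ and $t_it_j=t_jt_i$ ($|i-j|\geq2$); $s_is_{i+1}s_i=s_{i+1}s_is_{i+1}$ and $t_it_{i+1}t_i=t_{i+1}t_it_{i+1}$ ($1\le i\le n-2$); $t_is_jt_i=s_j$ ($|i-j|\geq 2$); $t_is_it_i=s_i$ ($1\le i\le n-1$); $t_{i+1}s_it_{i+1}=s_{i+1}s_is_{i+1}$ ($1\le i\le n-2$); $t_{i-1}s_it_{i-1}=s_{i-1}s_is_{i-1}$ ($2\le i\le n-1$). *)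

theory Defs
  imports "HOL-Algebra.Sym_Groups"
begin

definition semidirect_prod ::
  "('n, 'x) monoid_scheme \<Rightarrow> ('h, 'y) monoid_scheme \<Rightarrow> ('h \<Rightarrow> 'n \<Rightarrow> 'n) \<Rightarrow> ('n \<times> 'h) monoid"
  where "semidirect_prod N H phi =
    \<lparr> carrier = carrier N \<times> carrier H,
      mult = (\<lambda>(a, h) (b, k). (a \<otimes>\<^bsub>N\<^esub> phi h b, h \<otimes>\<^bsub>H\<^esub> k)),
      one = (\<one>\<^bsub>N\<^esub>, \<one>\<^bsub>H\<^esub>) \<rparr>"

definition M :: "nat \<Rightarrow> ((nat \<Rightarrow> nat) \<times> (nat \<Rightarrow> nat)) monoid"
  where "M n = semidirect_prod (sym_group n) (sym_group n)
                 (\<lambda>h b. h \<circ> b \<circ> inv\<^bsub>sym_group n\<^esub> h)"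

text \<open>Words over an alphabet of generators: a letter (x, False) stands for x,
  a letter (x, True) for x^-1.\<close>

type_synonym 'g word = "('g \<times> bool) list"

definition words_over :: "'g set \<Rightarrow> 'g word set"
  where "words_over X = {w. set w \<subseteq> X \<times> UNIV}"

definition eval_word :: "('a, 'b) monoid_scheme \<Rightarrow> ('g \<Rightarrow> 'a) \<Rightarrow> 'g word \<Rightarrow> 'a"
  where "eval_word G f w =
    foldr (\<lambda>(x, b) acc. (if b then inv\<^bsub>G\<^esub> (f x) else f x) \<otimes>\<^bsub>G\<^esub> acc) w \<one>\<^bsub>G\<^esub>"

text \<open>The quotient of words by it is the presented group.\<close>

inductive word_equiv :: "('g word \<times> 'g word) set \<Rightarrow> 'g word \<Rightarrow> 'g word \<Rightarrow> bool"
  for R where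
  refl: "word_equiv R w w"
| sym: "word_equiv R u v \<Longrightarrow> word_equiv R v u"
| trans: "word_equiv R u v \<Longrightarrow> word_equiv R v w \<Longrightarrow> word_equiv R u w"
| cancel: "word_equiv R (u @ [(x, b), (x, \<not> b)] @ v) (u @ v)"
| rel: "(l, r) \<in> R \<Longrightarrow> word_equiv R (u @ l @ v) (u @ r @ v)"

definition is_presentation ::
  "('a, 'b) monoid_scheme \<Rightarrow> 'g set \<Rightarrow> ('g \<Rightarrow> 'a) \<Rightarrow> ('g word \<times> 'g word) set \<Rightarrow> bool"
  where "is_presentation G X f R \<longleftrightarrow>
    group G \<and> f ` X \<subseteq> carrier G \<and> R \<subseteq> words_over X \<times> words_over X \<and>
    carrier G = eval_word G f ` words_over X \<and>
    (\<forall>u \<in> words_over X. \<forall>v \<in> words_over X.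
        eval_word G f u = eval_word G f v \<longleftrightarrow> word_equiv R u v)"

text \<open>Generator (False, i) is s_i, generator (True, i) is t_i.\<close>

definition M_gens :: "nat \<Rightarrow> (bool \<times> nat) set"
  where "M_gens n = {(b, i). 1 \<le> i \<and> i \<le> n - 1}"

definition M_gen_elem :: "nat \<Rightarrow> bool \<times> nat \<Rightarrow> (nat \<Rightarrow> nat) \<times> (nat \<Rightarrow> nat)"
  where "M_gen_elem n g = (case g of
      (False, i) \<Rightarrow> (transpose i (Suc i), id)
    | (True, i) \<Rightarrow> (id, transpose i (Suc i)))"

definition s :: "nat \<Rightarrow> (bool \<times> nat) \<times> bool" where "s i = ((False, i), False)"
definition t :: "nat \<Rightarrow> (bool \<times> nat) \<times> bool" where "t i = ((True, i), False)"

definition M_rels :: "nat \<Rightarrow> ((bool \<times> nat) word \<times> (bool \<times> nat) word) set"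
  where "M_rels n =
       {([t i, t i], []) | i. 1 \<le> i \<and> i \<le> n - 1}
     \<union> {([s i, s i], []) | i. 1 \<le> i \<and> i \<le> n - 1}
     \<union> {([s i, s j], [s j, s i]) | i j. 1 \<le> i \<and> i \<le> n - 1 \<and> 1 \<le> j \<and> j \<le> n - 1
                                      \<and> (i + 2 \<le> j \<or> j + 2 \<le> i)}
     \<union> {([t i, t j], [t j, t i]) | i j. 1 \<le> i \<and> i \<le> n - 1 \<and> 1 \<le> j \<and> j \<le> n - 1
                                      \<and> (i + 2 \<le> j \<or> j + 2 \<le> i)}
     \<union> {([s i, s (i+1), s i], [s (i+1), s i, s (i+1)]) | i. 1 \<le> i \<and> i \<le> n - 2}
     \<union> {([t i, t (i+1), t i], [t (i+1), t i, t (i+1)]) | i. 1 \<le> i \<and> i \<le> n - 2}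
     \<union> {([t i, s j, t i], [s j]) | i j. 1 \<le> i \<and> i \<le> n - 1 \<and> 1 \<le> j \<and> j \<le> n - 1
                                      \<and> (i + 2 \<le> j \<or> j + 2 \<le> i)}
     \<union> {([t i, s i, t i], [s i]) | i. 1 \<le> i \<and> i \<le> n - 1}
     \<union> {([t (i+1), s i, t (i+1)], [s (i+1), s i, s (i+1)]) | i. 1 \<le> i \<and> i \<le> n - 2}
     \<union> {([t (i-1), s i, t (i-1)], [s (i-1), s i, s (i-1)]) | i. 2 \<le> i \<and> i \<le> n - 1}"

end

theory Submission
  imports Defs
begin

(* The relations hold in M_n and the s_i, t_i generate it, so everything rests on showing
   that the relations identify enough words. The last four families let a letter t_i move
   to the right past any s_j at the cost of replacing s_j by an s-word; together with
   t_i^2 = s_i^2 = 1 this rewrites every word as an s-word followed by a t-word. By the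
   Coxeter relations alone, each of the two parts reduces to one of at most n! normal forms
   (a normal form for S_m followed by a descending run m, m-1, ..., m-k+1). Thus there are
   at most (n!)^2 = |M_n| normal words; as they evaluate onto M_n, evaluation is injective
   on them, and two words with the same value are equivalent. *)

section \<open>Presentations of finite groups by counting normal forms\<close>

declare word_equiv.trans [trans]

lemma word_equiv_append:
  assumes "word_equiv R u u'" "word_equiv R v v'"
  shows "word_equiv R (u @ v) (u' @ v')"
proof -
  have context_closed: "word_equiv R (x @ u @ y) (x @ u' @ y)"
    if "word_equiv R u u'" for x y u u'
    using that
  proof induction
    case (cancel u a b v)
    show ?case using word_equiv.cancel[of R "x @ u" a b "v @ y"] by simp
  next
    case (rel l r u v)
    show ?case using word_equiv.rel[OF rel, of "x @ u" "v @ y"] by simp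
  qed (auto intro: word_equiv.intros)
  from context_closed[OF assms(1), of "[]" v] context_closed[OF assms(2), of u' "[]"]
  show ?thesis by (auto intro: word_equiv.trans)
qed

lemma word_equiv_mono:
  assumes "word_equiv R u v" "R \<subseteq> R'"
  shows "word_equiv R' u v"
  using assms
proof induction
  case (cancel u x b v)
  show ?case using word_equiv.cancel[of R' u x b v] by simp
qed (auto intro: word_equiv.intros)

lemma eval_word_Nil [simp]: "eval_word G f [] = \<one>\<^bsub>G\<^esub>"
  and eval_word_Cons [simp]:
    "eval_word G f ((x, b) # w) = (if b then inv\<^bsub>G\<^esub> f x else f x) \<otimes>\<^bsub>G\<^esub> eval_word G f w"
  by (simp_all add: eval_word_def)

lemma words_over_Cons [simp]: "(x, b) # w \<in> words_over X \<longleftrightarrow> x \<in> X \<and> w \<in> words_over X"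
  and words_over_append [simp]: "u @ v \<in> words_over X \<longleftrightarrow> u \<in> words_over X \<and> v \<in> words_over X"
  and words_over_Nil [simp]: "[] \<in> words_over X"
  by (auto simp: words_over_def)

context group
begin

lemma eval_word_closed:
  assumes "f ` X \<subseteq> carrier G" "w \<in> words_over X"
  shows "eval_word G f w \<in> carrier G"
  using assms(2) by (induction w) (use assms(1) in \<open>auto simp: image_subset_iff\<close>)

lemma eval_word_append:
  assumes "f ` X \<subseteq> carrier G" "u \<in> words_over X" "v \<in> words_over X"
  shows "eval_word G f (u @ v) = eval_word G f u \<otimes> eval_word G f v"
  using assms(2)
proof (induction u)
  case (Cons a u)
  then show ?case
    using assms eval_word_closed[OF assms(1)] by (cases a) (auto simp: m_assoc image_subset_iff)
qed (use eval_word_closed[OF assms(1,3)] in simp)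

text \<open>Letters outside X may occur in the intermediate words of a derivation; since their
  images need not lie in G, they are erased before evaluating.\<close>

lemma eval_word_eq_if_word_equiv:
  assumes gens: "f ` X \<subseteq> carrier G" and R: "R \<subseteq> words_over X \<times> words_over X"
    and rels: "\<And>l r. (l, r) \<in> R \<Longrightarrow> eval_word G f l = eval_word G f r"
    and "word_equiv R u v" "u \<in> words_over X" "v \<in> words_over X"
  shows "eval_word G f u = eval_word G f v"
proof -
  define erase :: "'c word \<Rightarrow> 'c word" where "erase = filter (\<lambda>(x, _). x \<in> X)"
  have erase_over: "erase w \<in> words_over X" for w
    by (auto simp: erase_def words_over_def)
  have erase_id: "erase w = w" if "w \<in> words_over X" for w
    using that by (auto simp: erase_def words_over_def intro!: filter_True)
  have "eval_word G f (erase u) = eval_word G f (erase v)"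
    using \<open>word_equiv R u v\<close>
  proof induction
    case (cancel u x b v)
    have "eval_word G f ((x, b) # (x, \<not> b) # erase v) = eval_word G f (erase v)" if "x \<in> X"
      using that gens eval_word_closed[OF gens erase_over]
      by (cases b) (auto simp: m_assoc[symmetric] image_subset_iff)
    then show ?case
      using erase_over
      by (cases "x \<in> X") (simp_all add: erase_def eval_word_append[OF gens])
  next
    case (rel l r u v)
    then have "l \<in> words_over X" "r \<in> words_over X" using R by auto
    then show ?case
      using rels[OF rel] erase_id
      by (simp add: erase_def eval_word_append[OF gens] erase_over[unfolded erase_def])
  qed auto
  then show ?thesis using erase_id assms(5,6) by simp
qed

end

text \<open>Evaluation maps the normal forms N onto G; as there are at most |G| of them, it is
  injective on N.\<close>

lemma is_presentation_by_counting:
  assumes G: "group G" "finite (carrier G)"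
    and gens: "f ` X \<subseteq> carrier G" and R: "R \<subseteq> words_over X \<times> words_over X"
    and rels: "\<And>l r. (l, r) \<in> R \<Longrightarrow> eval_word G f l = eval_word G f r"
    and generated: "carrier G \<subseteq> eval_word G f ` words_over X"
    and N: "N \<subseteq> words_over X" "finite N" "card N \<le> card (carrier G)"
    and normal_form: "\<And>w. w \<in> words_over X \<Longrightarrow> \<exists>w' \<in> N. word_equiv R w w'"
  shows "is_presentation G X f R"
proof -
  interpret group G by (fact G(1))
  let ?eval = "eval_word G f"
  have eval_eq: "?eval u = ?eval v" if "word_equiv R u v" "u \<in> words_over X" "v \<in> words_over X" for u v
    by (rule eval_word_eq_if_word_equiv[OF gens R rels that])
  have carrier_eq: "carrier G = ?eval ` words_over X"
    using generated eval_word_closed[OF gens] by auto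
  have "carrier G \<subseteq> ?eval ` N"
  proof
    fix g assume "g \<in> carrier G"
    then obtain w where w: "w \<in> words_over X" "g = ?eval w" using generated by auto
    then obtain w' where "w' \<in> N" "word_equiv R w w'" using normal_form by blast
    then show "g \<in> ?eval ` N" using w eval_eq N(1) by blast
  qed
  then have "card (carrier G) \<le> card (?eval ` N)"
    by (simp add: card_mono N(2))
  then have inj: "inj_on ?eval N"
    using N(2,3) card_image_le[OF N(2), of ?eval] by (intro eq_card_imp_inj_on) auto
  have "word_equiv R u v"
    if uv: "u \<in> words_over X" "v \<in> words_over X" "?eval u = ?eval v" for u v
  proof -
    obtain u' v' where "u' \<in> N" "v' \<in> N" and uv': "word_equiv R u u'" "word_equiv R v v'"
      using normal_form uv(1,2) by meson
    moreover from this have "?eval u' = ?eval v'" using uv eval_eq N(1) by (metis subsetD)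
    ultimately have "u' = v'" using inj by (auto dest: inj_onD)
    then show ?thesis using uv' by (metis word_equiv.sym word_equiv.trans)
  qed
  then show ?thesis
    unfolding is_presentation_def using G(1) gens R carrier_eq eval_eq by blast
qed

section \<open>Normal forms for the Coxeter presentation of the symmetric group\<close>

definition coxeter_A_rels :: "(nat \<Rightarrow> 'g \<times> bool) \<Rightarrow> nat \<Rightarrow> ('g word \<times> 'g word) set"
  where "coxeter_A_rels a n =
       {([a i, a i], []) | i. 1 \<le> i \<and> i \<le> n - 1}
     \<union> {([a i, a j], [a j, a i]) | i j. 1 \<le> i \<and> i \<le> n - 1 \<and> 1 \<le> j \<and> j \<le> n - 1
                                      \<and> (i + 2 \<le> j \<or> j + 2 \<le> i)}
     \<union> {([a i, a (i+1), a i], [a (i+1), a i, a (i+1)]) | i. 1 \<le> i \<and> i \<le> n - 2}"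

text \<open>down_run m k = [m, m - 1, ..., m - k + 1]. The normal forms for S_(m+1) are the words
  w @ down_run m k with w a normal form for S_m and k \<le> m, one for each right coset of S_m.\<close>

fun down_run :: "nat \<Rightarrow> nat \<Rightarrow> nat list" where
  "down_run m 0 = []"
| "down_run m (Suc k) = down_run m k @ [m - k]"

fun coxeter_nf :: "nat \<Rightarrow> nat list set" where
  "coxeter_nf 0 = {[]}"
| "coxeter_nf (Suc m) = (\<lambda>(w, k). w @ down_run m k) ` (coxeter_nf m \<times> {..m})"

lemma set_down_run: "k \<le> m \<Longrightarrow> set (down_run m k) = {m - k<..m}"
  by (induction k) (auto simp: Suc_diff_le)

lemma set_coxeter_nf: "w \<in> coxeter_nf m \<Longrightarrow> set w \<subseteq> {1..m - 1}"
  by (induction m arbitrary: w) (fastforce simp: set_down_run)+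

lemma Nil_in_coxeter_nf: "[] \<in> coxeter_nf m"
  by (induction m) (force intro: image_eqI[of _ _ "([], 0)"])+

lemma finite_coxeter_nf: "finite (coxeter_nf m)"
  by (induction m) auto

lemma card_coxeter_nf_le: "card (coxeter_nf m) \<le> fact m"
proof (induction m)
  case (Suc m)
  have "card (coxeter_nf (Suc m)) \<le> card (coxeter_nf m \<times> {..m})"
    unfolding coxeter_nf.simps by (rule card_image_le) (simp add: finite_coxeter_nf)
  also have "\<dots> = card (coxeter_nf m) * Suc m"
    by (simp add: card_cartesian_product)
  also have "\<dots> \<le> fact m * Suc m"
    using Suc.IH by (rule mult_le_mono1)
  finally show ?case by (simp add: fact_Suc mult.commute)
qed simp

context
  fixes a :: "nat \<Rightarrow> 'g \<times> bool" and n :: nat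
begin

abbreviation coxeter_equiv :: "nat list \<Rightarrow> nat list \<Rightarrow> bool"
  where "coxeter_equiv u v \<equiv> word_equiv (coxeter_A_rels a n) (map a u) (map a v)"

lemma coxeter_equiv_append:
  "coxeter_equiv u u' \<Longrightarrow> coxeter_equiv v v' \<Longrightarrow> coxeter_equiv (u @ v) (u' @ v')"
  using word_equiv_append by fastforce

lemma coxeter_equiv_rel:
  assumes "(map a l, map a r) \<in> coxeter_A_rels a n"
  shows "coxeter_equiv (x @ l @ y) (x @ r @ y)"
  using word_equiv.rel[OF assms] by simp

lemma coxeter_equiv_square:
  "1 \<le> i \<Longrightarrow> i \<le> n - 1 \<Longrightarrow> coxeter_equiv (x @ [i, i] @ y) (x @ y)"
  using coxeter_equiv_rel[of "[i, i]" "[]"] by (auto simp: coxeter_A_rels_def)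

lemma coxeter_equiv_commute:
  assumes "1 \<le> i" "i \<le> n - 1" "1 \<le> j" "j \<le> n - 1" "i + 2 \<le> j \<or> j + 2 \<le> i"
  shows "coxeter_equiv (x @ [i, j] @ y) (x @ [j, i] @ y)"
  using assms coxeter_equiv_rel[of "[i, j]" "[j, i]"] by (auto simp: coxeter_A_rels_def)

lemma coxeter_equiv_braid:
  "1 \<le> i \<Longrightarrow> i \<le> n - 2 \<Longrightarrow> coxeter_equiv (x @ [i, i + 1, i] @ y) (x @ [i + 1, i, i + 1] @ y)"
  using coxeter_equiv_rel[of "[i, i + 1, i]" "[i + 1, i, i + 1]"] by (auto simp: coxeter_A_rels_def)

lemma coxeter_equiv_commute_past:
  assumes "\<forall>x \<in> set u. 1 \<le> x \<and> x \<le> n - 1 \<and> (x + 2 \<le> j \<or> j + 2 \<le> x)" "1 \<le> j" "j \<le> n - 1"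
  shows "coxeter_equiv (u @ [j]) (j # u)"
  using assms(1)
proof (induction u)
  case (Cons x u)
  have "coxeter_equiv ([x] @ u @ [j]) ([x] @ j # u)"
    using Cons by (intro coxeter_equiv_append) (auto intro: word_equiv.refl)
  moreover have "coxeter_equiv ([] @ [x, j] @ u) ([] @ [j, x] @ u)"
    using Cons.prems assms(2,3) by (intro coxeter_equiv_commute) auto
  ultimately show ?case by (auto intro: word_equiv.trans)
qed (simp add: word_equiv.refl)

text \<open>The letter j commutes past the part of the run above j + 1, and the braid relation
  j (j - 1) j = (j - 1) j (j - 1) moves it past the letters j and j - 1 of the run.\<close>

lemma coxeter_equiv_down_run_snoc:
  assumes "k \<le> m" "m < n" "m - k + 2 \<le> j" "j \<le> m"
  shows "coxeter_equiv (down_run m k @ [j]) ((j - 1) # down_run m k)"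
  using assms
proof (induction k arbitrary: j)
  case (Suc k)
  show ?case
  proof (cases "m - k + 2 \<le> j")
    case True
    have "coxeter_equiv (down_run m k @ [m - k, j] @ []) (down_run m k @ [j, m - k] @ [])"
      using Suc.prems True by (intro coxeter_equiv_commute) auto
    moreover have "coxeter_equiv (down_run m k @ [j] @ [m - k]) ((j - 1) # down_run m k @ [m - k])"
      using coxeter_equiv_append[OF Suc.IH word_equiv.refl, of j "[m - k]"] Suc.prems True by simp
    ultimately show ?thesis by (auto intro: word_equiv.trans)
  next
    case False
    then have j: "j = m - k + 1" using Suc.prems by simp
    then obtain k' where k': "k = Suc k'" using Suc.prems by (cases k) auto
    then have run: "down_run m (Suc k) = down_run m k' @ [j, j - 1]" using j Suc.prems by simp
    have "1 \<le> j - 1" "j - 1 \<le> n - 2" using Suc.prems j by auto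
    from coxeter_equiv_braid[OF this, of "down_run m k'" "[]"]
    have "coxeter_equiv (down_run m k' @ [j - 1, j, j - 1] @ []) (down_run m k' @ [j, j - 1, j] @ [])"
      using j by simp
    moreover have "coxeter_equiv ((down_run m k' @ [j - 1]) @ [j, j - 1]) (((j - 1) # down_run m k') @ [j, j - 1])"
      using Suc.prems j k' set_down_run[of k' m]
      by (intro coxeter_equiv_append coxeter_equiv_commute_past) (auto intro: word_equiv.refl)
    ultimately show ?thesis unfolding run by (auto intro: word_equiv.trans word_equiv.sym)
  qed
qed simp

lemma coxeter_nf_snoc:
  assumes "m \<le> n" "w \<in> coxeter_nf m" "1 \<le> j" "j < m"
  shows "\<exists>w' \<in> coxeter_nf m. coxeter_equiv (w @ [j]) w'"
  using assms
proof (induction m arbitrary: w j)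
  case (Suc m)
  from Suc.prems obtain w0 k where w: "w = w0 @ down_run m k" "w0 \<in> coxeter_nf m" "k \<le> m"
    by auto
  consider "j + k = m" | "j + k = m + 1" | "j + k \<noteq> m" "j + k \<noteq> m + 1" by linarith
  then show ?case
  proof cases
    case 1
    then have "w @ [j] \<in> coxeter_nf (Suc m)"
      using w Suc.prems by (auto intro!: image_eqI[of _ _ "(w0, Suc k)"])
    then show ?thesis using word_equiv.refl by blast
  next
    case 2
    then obtain k' where k': "k = Suc k'" using Suc.prems by (cases k) auto
    then have "w @ [j] = (w0 @ down_run m k') @ [j, j] @ []" using w 2 by simp
    moreover have "coxeter_equiv ((w0 @ down_run m k') @ [j, j] @ []) ((w0 @ down_run m k') @ [])"
      using Suc.prems by (intro coxeter_equiv_square) auto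
    moreover have "w0 @ down_run m k' \<in> coxeter_nf (Suc m)"
      using w k' by (auto intro!: image_eqI[of _ _ "(w0, k')"])
    ultimately show ?thesis by (metis append_Nil2)
  next
    case 3
    obtain j' where j': "1 \<le> j'" "j' < m" "coxeter_equiv (down_run m k @ [j]) (j' # down_run m k)"
    proof (cases "j + k < m")
      case True
      then have "coxeter_equiv (down_run m k @ [j]) (j # down_run m k)"
        using Suc.prems w(3) by (intro coxeter_equiv_commute_past) (auto simp: set_down_run)
      then show ?thesis using that[of j] Suc.prems True by simp
    next
      case False
      then have "coxeter_equiv (down_run m k @ [j]) ((j - 1) # down_run m k)"
        using Suc.prems w(3) 3 by (intro coxeter_equiv_down_run_snoc) auto
      then show ?thesis using that[of "j - 1"] Suc.prems False 3 w(3) by simp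
    qed
    obtain w0' where w0': "w0' \<in> coxeter_nf m" "coxeter_equiv (w0 @ [j']) w0'"
      using Suc.IH[OF _ w(2) j'(1,2)] Suc.prems(1) by auto
    have "coxeter_equiv (w0 @ down_run m k @ [j]) (w0 @ j' # down_run m k)"
      using coxeter_equiv_append[OF word_equiv.refl j'(3)] by simp
    moreover have "coxeter_equiv ((w0 @ [j']) @ down_run m k) (w0' @ down_run m k)"
      using coxeter_equiv_append[OF w0'(2) word_equiv.refl] .
    ultimately have "coxeter_equiv (w @ [j]) (w0' @ down_run m k)"
      using w(1) by (auto intro: word_equiv.trans)
    moreover have "w0' @ down_run m k \<in> coxeter_nf (Suc m)"
      using w w0' by (auto intro!: image_eqI[of _ _ "(w0', k)"])
    ultimately show ?thesis by blast
  qed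
qed simp

lemma coxeter_nf_complete:
  assumes "set xs \<subseteq> {1..n - 1}"
  shows "\<exists>w \<in> coxeter_nf n. coxeter_equiv xs w"
  using assms
proof (induction xs rule: rev_induct)
  case Nil
  show ?case by (intro bexI[of _ "[]"]) (auto intro: word_equiv.refl Nil_in_coxeter_nf)
next
  case (snoc x xs)
  then obtain w where w: "w \<in> coxeter_nf n" "coxeter_equiv xs w" by auto
  moreover have "1 \<le> x" "x < n" using snoc.prems by auto
  then obtain w' where "w' \<in> coxeter_nf n" "coxeter_equiv (w @ [x]) w'"
    using coxeter_nf_snoc[OF order.refl w(1)] by blast
  moreover have "coxeter_equiv (xs @ [x]) (w @ [x])"
    using coxeter_equiv_append[OF w(2) word_equiv.refl] .
  ultimately show ?case by (auto intro: word_equiv.trans)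
qed

end

section \<open>Semidirect products\<close>

lemma semidirect_prod_group:
  assumes N: "group N" and H: "group H"
    and act_hom: "\<And>h. h \<in> carrier H \<Longrightarrow> phi h \<in> hom N N"
    and act_one: "\<And>a. a \<in> carrier N \<Longrightarrow> phi \<one>\<^bsub>H\<^esub> a = a"
    and act_mult: "\<And>h k a. \<lbrakk>h \<in> carrier H; k \<in> carrier H; a \<in> carrier N\<rbrakk>
                     \<Longrightarrow> phi (h \<otimes>\<^bsub>H\<^esub> k) a = phi h (phi k a)"
  shows "group (semidirect_prod N H phi)"
proof -
  interpret N: group N by (fact N)
  interpret H: group H by (fact H)
  have act_closed: "phi h a \<in> carrier N" if "h \<in> carrier H" "a \<in> carrier N" for h a
    using hom_in_carrier[OF act_hom] that .
  have act_hom_mult: "phi h (a \<otimes>\<^bsub>N\<^esub> b) = phi h a \<otimes>\<^bsub>N\<^esub> phi h b"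
    if "h \<in> carrier H" "a \<in> carrier N" "b \<in> carrier N" for h a b
    using hom_mult[OF act_hom] that by blast
  have act_hom_one: "phi h \<one>\<^bsub>N\<^esub> = \<one>\<^bsub>N\<^esub>" if "h \<in> carrier H" for h
    using hom_one[OF act_hom[OF that] N N] .
  let ?S = "semidirect_prod N H phi"
  show ?thesis
  proof (rule groupI)
    fix x y z assume "x \<in> carrier ?S" "y \<in> carrier ?S" "z \<in> carrier ?S"
    then show "x \<otimes>\<^bsub>?S\<^esub> y \<otimes>\<^bsub>?S\<^esub> z = x \<otimes>\<^bsub>?S\<^esub> (y \<otimes>\<^bsub>?S\<^esub> z)"
      by (auto simp: semidirect_prod_def act_closed act_hom_mult act_mult N.m_assoc H.m_assoc)
  next
    fix x assume "x \<in> carrier ?S"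
    then obtain a h where x: "x = (a, h)" "a \<in> carrier N" "h \<in> carrier H"
      by (auto simp: semidirect_prod_def)
    let ?y = "(phi (inv\<^bsub>H\<^esub> h) (inv\<^bsub>N\<^esub> a), inv\<^bsub>H\<^esub> h)"
    have "?y \<in> carrier ?S" "?y \<otimes>\<^bsub>?S\<^esub> x = \<one>\<^bsub>?S\<^esub>"
      using x by (simp_all add: semidirect_prod_def act_closed act_hom_one flip: act_hom_mult)
    then show "\<exists>y \<in> carrier ?S. y \<otimes>\<^bsub>?S\<^esub> x = \<one>\<^bsub>?S\<^esub>" by blast
  qed (auto simp: semidirect_prod_def act_closed act_one)
qed

lemma semidirect_prod_conj_group:
  assumes "group G"
  shows "group (semidirect_prod G G (\<lambda>h b. h \<otimes>\<^bsub>G\<^esub> b \<otimes>\<^bsub>G\<^esub> inv\<^bsub>G\<^esub> h))"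
proof -
  interpret group G by (fact assms)
  have cancel: "inv\<^bsub>G\<^esub> h \<otimes>\<^bsub>G\<^esub> (h \<otimes>\<^bsub>G\<^esub> z) = z" if "h \<in> carrier G" "z \<in> carrier G" for h z
    using that by (simp flip: m_assoc)
  show ?thesis
    by (rule semidirect_prod_group[OF assms assms])
       (auto intro!: homI simp: m_assoc inv_mult_group cancel)
qed

section \<open>The group M_n\<close>

lemma M_is_group: "group (M n)"
proof -
  have "M n = semidirect_prod (sym_group n) (sym_group n)
                (\<lambda>h b. h \<otimes>\<^bsub>sym_group n\<^esub> b \<otimes>\<^bsub>sym_group n\<^esub> inv\<^bsub>sym_group n\<^esub> h)"
    by (simp add: M_def sym_group_mult)
  then show ?thesis using semidirect_prod_conj_group[OF sym_group_is_group] by simp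
qed

lemma M_carrier: "carrier (M n) = {p. p permutes {1..n}} \<times> {p. p permutes {1..n}}"
  by (simp add: M_def semidirect_prod_def sym_group_def)

lemma M_card_carrier: "card (carrier (M n)) = fact n * fact n"
  using sym_group_card_carrier[of n] by (simp add: M_carrier card_cartesian_product sym_group_def)

lemma M_finite_carrier: "finite (carrier (M n))"
  using M_card_carrier[of n] by (intro card_ge_0_finite) simp

lemma M_one [simp]: "\<one>\<^bsub>M n\<^esub> = (id, id)"
  by (simp add: M_def semidirect_prod_def sym_group_def)

lemma M_mult:
  "h permutes {1..n} \<Longrightarrow> (a, h) \<otimes>\<^bsub>M n\<^esub> (b, k) = (a \<circ> h \<circ> b \<circ> inv' h, h \<circ> k)"
  by (simp add: M_def semidirect_prod_def sym_group_mult sym_group_carrier comp_assoc)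

lemma M_gen_elem_simps [simp]:
  "M_gen_elem n (False, i) = (transpose i (Suc i), id)"
  "M_gen_elem n (True, i) = (id, transpose i (Suc i))"
  by (simp_all add: M_gen_elem_def)

lemma M_gen_elem_in_carrier: "M_gen_elem n ` M_gens n \<subseteq> carrier (M n)"
  by (auto simp: M_gens_def M_gen_elem_def M_carrier permutes_swap_id split: bool.split_asm)

lemma M_rels_hold:
  assumes "(l, r) \<in> M_rels n"
  shows "eval_word (M n) (M_gen_elem n) l = eval_word (M n) (M_gen_elem n) r"
  using assms unfolding M_rels_def
  by (auto simp: s_def t_def M_mult permutes_swap_id le_diff_conv2 fun_eq_iff transpose_def)

lemma M_rels_subset_words_over: "M_rels n \<subseteq> words_over (M_gens n) \<times> words_over (M_gens n)"
  unfolding M_rels_def by (auto simp: words_over_def M_gens_def s_def t_def)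

lemma apply_adj_transps_append:
  "apply_adj_transps (xs @ ys) = apply_adj_transps xs \<circ> apply_adj_transps ys"
  by (induction xs) (simp_all add: comp_assoc)

lemma permutes_from_adj_transpositions:
  assumes "p permutes {1..n}"
  shows "\<exists>xs. set xs \<subseteq> {1..n - 1} \<and> apply_adj_transps xs = p"
  using assms finite_atLeastAtMost
proof (induction rule: permutes_induct)
  case id
  show ?case by (intro exI[of _ "[]"]) simp
next
  case (swap a b p)
  then obtain xs where xs: "set xs \<subseteq> {1..n - 1}" "apply_adj_transps xs = p" by blast
  define ys where "ys = adj_transp_seq (min a b) (max a b)"
  have "apply_adj_transps ys = transpose a b"
    using swap.hyps(3) adj_transp_seq_correct[of "min a b" "max a b"]
    by (auto simp: ys_def min_def max_def transpose_commute)
  moreover have "set ys \<subseteq> {1..n - 1}"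
    using swap.hyps(1-3) by (auto simp: ys_def set_adj_transp_seq min_def max_def)
  ultimately show ?case
    using xs by (intro exI[of _ "ys @ xs"]) (simp add: apply_adj_transps_append)
qed

lemma eval_word_M_s:
  "set xs \<subseteq> {1..n - 1} \<Longrightarrow> eval_word (M n) (M_gen_elem n) (map s xs) = (apply_adj_transps xs, id)"
  by (induction xs) (auto simp: s_def M_mult)

lemma eval_word_M_t:
  "set xs \<subseteq> {1..n - 1} \<Longrightarrow> eval_word (M n) (M_gen_elem n) (map t xs) = (id, apply_adj_transps xs)"
  by (induction xs) (auto simp: t_def M_mult permutes_swap_id le_diff_conv2)

lemma s_word_in_words_over: "set xs \<subseteq> {1..n - 1} \<Longrightarrow> map s xs \<in> words_over (M_gens n)"
  and t_word_in_words_over: "set xs \<subseteq> {1..n - 1} \<Longrightarrow> map t xs \<in> words_over (M_gens n)"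
  by (auto simp: words_over_def M_gens_def s_def t_def)

lemma M_generated: "carrier (M n) \<subseteq> eval_word (M n) (M_gen_elem n) ` words_over (M_gens n)"
proof
  fix x assume "x \<in> carrier (M n)"
  then obtain a h where x: "x = (a, h)" "a permutes {1..n}" "h permutes {1..n}"
    by (auto simp: M_carrier)
  obtain xs ys where xs: "set xs \<subseteq> {1..n - 1}" "apply_adj_transps xs = a"
    and ys: "set ys \<subseteq> {1..n - 1}" "apply_adj_transps ys = h"
    using permutes_from_adj_transpositions x(2,3) by metis
  have "eval_word (M n) (M_gen_elem n) (map s xs @ map t ys) = (a, id) \<otimes>\<^bsub>M n\<^esub> (id, h)"
    using group.eval_word_append[OF M_is_group M_gen_elem_in_carrier]
      s_word_in_words_over[OF xs(1)] t_word_in_words_over[OF ys(1)]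
    by (simp add: eval_word_M_s[OF xs(1)] eval_word_M_t[OF ys(1)] xs(2) ys(2))
  also have "\<dots> = x" by (simp add: x M_mult)
  finally show "x \<in> eval_word (M n) (M_gen_elem n) ` words_over (M_gens n)"
    using s_word_in_words_over[OF xs(1)] t_word_in_words_over[OF ys(1)] by (auto intro: sym)
qed

section \<open>Normal forms for words in the generators of M_n\<close>

lemma coxeter_A_rels_subset_M_rels:
  "coxeter_A_rels s n \<subseteq> M_rels n" "coxeter_A_rels t n \<subseteq> M_rels n"
  unfolding coxeter_A_rels_def M_rels_def by blast+

lemma M_rels_square: "x \<in> M_gens n \<Longrightarrow> ([(x, False), (x, False)], []) \<in> M_rels n"
  by (auto simp: M_gens_def M_rels_def s_def t_def)

lemma word_equiv_M_inverse_letter: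
  assumes "x \<in> M_gens n"
  shows "word_equiv (M_rels n) [(x, True)] [(x, False)]"
proof -
  have "word_equiv (M_rels n) ([(x, True)] @ [(x, False), (x, False)] @ []) ([(x, True)] @ [] @ [])"
    using word_equiv.rel[OF M_rels_square[OF assms]] .
  moreover have "word_equiv (M_rels n) ([] @ [(x, True), (x, \<not> True)] @ [(x, False)]) ([] @ [(x, False)])"
    by (rule word_equiv.cancel)
  ultimately show ?thesis by (auto intro: word_equiv.sym word_equiv.trans)
qed

lemma M_rels_t_s_t:
  assumes "1 \<le> i" "i \<le> n - 1" "1 \<le> j" "j \<le> n - 1"
  obtains ws where "set ws \<subseteq> {1..n - 1}" "([t i, s j, t i], map s ws) \<in> M_rels n"
proof -
  consider "i + 2 \<le> j \<or> j + 2 \<le> i \<or> i = j" | "i = j + 1" | "j = i + 1" by linarith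
  then show ?thesis
  proof cases
    case 1
    then show ?thesis using assms that[of "[j]"] by (auto simp: M_rels_def)
  next
    case 2
    then have "([t (j + 1), s j, t (j + 1)], [s (j + 1), s j, s (j + 1)]) \<in> M_rels n"
      using assms unfolding M_rels_def by auto
    then show ?thesis using assms 2 that[of "[j + 1, j, j + 1]"] by auto
  next
    case 3
    have "([t (j - 1), s j, t (j - 1)], [s (j - 1), s j, s (j - 1)]) \<in> M_rels n"
      unfolding M_rels_def using assms 3 by (intro UnI2 CollectI exI[of _ j]) auto
    then show ?thesis using assms 3 that[of "[i, i + 1, i]"] by auto
  qed
qed

lemma word_equiv_t_past_s_word:
  assumes "1 \<le> i" "i \<le> n - 1" "set xs \<subseteq> {1..n - 1}"
  obtains xs' where "set xs' \<subseteq> {1..n - 1}"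
    "word_equiv (M_rels n) (t i # map s xs) (map s xs' @ [t i])"
  using assms(3)
proof (induction xs arbitrary: thesis)
  case Nil
  show ?case using Nil.prems(1)[of "[]"] by (simp add: word_equiv.refl)
next
  case (Cons j xs)
  obtain ws where ws: "set ws \<subseteq> {1..n - 1}" "([t i, s j, t i], map s ws) \<in> M_rels n"
    using M_rels_t_s_t assms(1,2) Cons.prems(2) by (metis atLeastAtMost_iff insert_subset list.set(2))
  obtain xs' where xs': "set xs' \<subseteq> {1..n - 1}"
    "word_equiv (M_rels n) (t i # map s xs) (map s xs' @ [t i])"
    using Cons.IH Cons.prems(2) by auto
  have "([t i, t i], []) \<in> M_rels n"
    using M_rels_square[of "(True, i)"] assms(1,2) by (simp add: M_gens_def t_def)
  then have "word_equiv (M_rels n) ([t i, s j] @ [] @ map s xs) ([t i, s j] @ [t i, t i] @ map s xs)"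
    by (blast intro: word_equiv.rel word_equiv.sym)
  also have "word_equiv (M_rels n) \<dots> (map s ws @ t i # map s xs)"
    using word_equiv.rel[OF ws(2), of "[]" "t i # map s xs"] by simp
  also have "word_equiv (M_rels n) \<dots> (map s ws @ map s xs' @ [t i])"
    using word_equiv_append[OF word_equiv.refl xs'(2)] .
  finally show ?case
    using Cons.prems(1)[of "ws @ xs'"] ws(1) xs'(1) by simp
qed

lemma word_equiv_M_s_word_t_word:
  assumes "w \<in> words_over (M_gens n)"
  obtains xs ys where "set xs \<subseteq> {1..n - 1}" "set ys \<subseteq> {1..n - 1}"
    "word_equiv (M_rels n) w (map s xs @ map t ys)"
  using assms
proof (induction w arbitrary: thesis)
  case Nil
  show ?case using Nil.prems(1)[of "[]" "[]"] by (simp add: word_equiv.refl)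
next
  case (Cons l w)
  obtain c i b where l: "l = ((c, i), b)" by (metis prod.exhaust)
  then have i: "1 \<le> i" "i \<le> n - 1" using Cons.prems(2) by (auto simp: M_gens_def)
  obtain xs ys where xs: "set xs \<subseteq> {1..n - 1}" and ys: "set ys \<subseteq> {1..n - 1}"
    and w: "word_equiv (M_rels n) w (map s xs @ map t ys)"
    using Cons.IH Cons.prems(2) l by auto
  have "word_equiv (M_rels n) [l] [((c, i), False)]"
    using word_equiv_M_inverse_letter[of "(c, i)" n] Cons.prems(2) l
    by (cases b) (auto intro: word_equiv.refl)
  from word_equiv_append[OF this w]
  have lw: "word_equiv (M_rels n) (l # w) (((c, i), False) # map s xs @ map t ys)" by simp
  show ?case
  proof (cases c)
    case False
    then have "((c, i), False) = s i" by (simp add: s_def)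
    then show ?thesis using Cons.prems(1)[of "i # xs" ys] lw xs ys i by simp
  next
    case True
    obtain xs' where xs': "set xs' \<subseteq> {1..n - 1}"
      "word_equiv (M_rels n) (t i # map s xs) (map s xs' @ [t i])"
      using word_equiv_t_past_s_word[OF i xs] by blast
    have "word_equiv (M_rels n) (l # w) ((t i # map s xs) @ map t ys)"
      using lw True by (simp add: t_def)
    also have "word_equiv (M_rels n) \<dots> (map s xs' @ map t (i # ys))"
      using word_equiv_append[OF xs'(2) word_equiv.refl] by simp
    finally show ?thesis using Cons.prems(1)[of xs' "i # ys"] xs'(1) ys i by simp
  qed
qed

lemma M_normal_form:
  assumes "w \<in> words_over (M_gens n)"
  shows "\<exists>a \<in> coxeter_nf n. \<exists>c \<in> coxeter_nf n. word_equiv (M_rels n) w (map s a @ map t c)"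
proof -
  obtain xs ys where xs: "set xs \<subseteq> {1..n - 1}" and ys: "set ys \<subseteq> {1..n - 1}"
    and w: "word_equiv (M_rels n) w (map s xs @ map t ys)"
    using word_equiv_M_s_word_t_word[OF assms] by blast
  obtain a where a: "a \<in> coxeter_nf n" "coxeter_equiv s n xs a"
    using coxeter_nf_complete[OF xs] by blast
  obtain c where c: "c \<in> coxeter_nf n" "coxeter_equiv t n ys c"
    using coxeter_nf_complete[OF ys] by blast
  note w
  also have "word_equiv (M_rels n) (map s xs @ map t ys) (map s a @ map t c)"
    using word_equiv_mono[OF a(2) coxeter_A_rels_subset_M_rels(1)]
      word_equiv_mono[OF c(2) coxeter_A_rels_subset_M_rels(2)]
    by (intro word_equiv_append) simp_all
  finally show ?thesis using a(1) c(1) by blast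
qed

theorem proposition7p2:
  fixes n :: nat
  shows "is_presentation (M n) (M_gens n) (M_gen_elem n) (M_rels n)"
proof (rule is_presentation_by_counting)
  let ?N = "(\<lambda>(a, c). map s a @ map t c) ` (coxeter_nf n \<times> coxeter_nf n)"
  show "?N \<subseteq> words_over (M_gens n)"
    by (auto intro: s_word_in_words_over[OF set_coxeter_nf] t_word_in_words_over[OF set_coxeter_nf])
  show "finite ?N" by (simp add: finite_coxeter_nf)
  have "card ?N \<le> card (coxeter_nf n) * card (coxeter_nf n)"
    using card_image_le[of "coxeter_nf n \<times> coxeter_nf n"] by (simp add: finite_coxeter_nf card_cartesian_product)
  also have "\<dots> \<le> card (carrier (M n))"
    using card_coxeter_nf_le[of n] by (simp add: M_card_carrier mult_le_mono)
  finally show "card ?N \<le> card (carrier (M n))" .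
  show "\<exists>w' \<in> ?N. word_equiv (M_rels n) w w'" if "w \<in> words_over (M_gens n)" for w
    using M_normal_form[OF that] by fast
qed (simp_all add: M_is_group M_finite_carrier M_gen_elem_in_carrier M_rels_subset_words_over
    M_rels_hold M_generated)

end
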